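(* Let $\Omega$ be a domain, $G\subset\mathbb{C}$ a closed set with empty interior, $\Phi=(\phi_n)_n$ a sequence of continuous mappings from $G$ to $\Omega$, and $\mathcal{M}$ a countable family of compact subsets of $G$. If there exists a $(\Phi,\mathcal{M})$-universal function in $H(\Omega)$, then for any compact set $L\subset\Omega$, any $K\in\mathcal{M}$ and any disjoint $I_1,I_2\in\mathcal{M}$ with $K\cup I_1\cup I_2\in\mathcal{M}$, there exist infinitely many $n\in\mathbb{N}$ such that both $\phi_n(K)\cap L=\emptyset$ and $\phi_n(I_1)\cap\phi_n(I_2)=\emptyset$.
   Context: $H(\Omega)$ is the Fréchet space of holomorphic functions on $\Omega$ with the locally uniform topology; $\mathcal{C}(K)$ is the Banach space of continuous functions on $K$ with the sup norm. $f\in H(\Omega)$ is $(\Phi,\mathcal{M})$-universal if for every $K\in\mathcal{M}$ the set $\{f\circ\phi_n|_K:\,n\in\mathbb{N}\}$ is dense in $\mathcal{C}(K)$. *)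

theory Defs
  imports "HOL-Analysis.Analysis"
begin

definition dense_in_CK :: "complex set \<Rightarrow> (complex \<Rightarrow> complex) set \<Rightarrow> bool" where
  "dense_in_CK K F \<longleftrightarrow>
     (\<forall>g. continuous_on K g \<longrightarrow>
        (\<forall>e>0. \<exists>h\<in>F. continuous_on K h \<and> (\<forall>z\<in>K. cmod (h z - g z) < e)))"

definition universal ::
  "complex set \<Rightarrow> (nat \<Rightarrow> complex \<Rightarrow> complex) \<Rightarrow> complex set set \<Rightarrow> (complex \<Rightarrow> complex) \<Rightarrow> bool" where
  "universal \<Omega> \<phi> \<M> f \<longleftrightarrow> f holomorphic_on \<Omega> \<and>
     (\<forall>K\<in>\<M>. dense_in_CK K {f \<circ> \<phi> n | n. True})"

end

theory Submission
  imports Defs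
begin

text \<open>It suffices to find, for every m, a good index n \<ge> m. The modulus of f is bounded on
the compact L, and so is the finite family f(\<phi>_k(z0)), k < m, for a point z0 of K \<union> I1 \<union> I2.
By universality, f \<circ> \<phi>_n approximates on K \<union> I1 \<union> I2 an Urysohn function that exceeds both
bounds, equals A on I1 and A + 3 on I2. Then n \<ge> m, \<phi>_n(K) misses L since |f| is too large
there, and \<phi>_n(I1), \<phi>_n(I2) are disjoint since f is near A on the first and near A + 3 on
the second.\<close>

lemma universal_approximates:
  assumes "universal \<Omega> \<phi> \<M> f" "S \<in> \<M>" "continuous_on S g" "e > 0"
  obtains n where "\<And>z. z \<in> S \<Longrightarrow> cmod (f (\<phi> n z) - g z) < e"
  using assms unfolding universal_def dense_in_CK_def by fastforce

lemma image_disjoint_if_norm_gt: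
  assumes "\<And>z. z \<in> K \<Longrightarrow> cmod (f (\<psi> z)) > B" "\<And>w. w \<in> L \<Longrightarrow> cmod (f w) \<le> B"
  shows "\<psi> ` K \<inter> L = {}"
  using assms by force

lemma image_disjoint_if_close_to_distinct:
  assumes "\<And>z. z \<in> I1 \<Longrightarrow> cmod (f (\<psi> z) - a) < r"
    and "\<And>z. z \<in> I2 \<Longrightarrow> cmod (f (\<psi> z) - b) < r"
    and "2 * r \<le> cmod (a - b)"
  shows "\<psi> ` I1 \<inter> \<psi> ` I2 = {}"
proof -
  have "\<psi> z1 \<noteq> \<psi> z2" if "z1 \<in> I1" "z2 \<in> I2" for z1 z2
  proof
    assume "\<psi> z1 = \<psi> z2"
    then have "a - b = (f (\<psi> z2) - b) - (f (\<psi> z1) - a)" by simp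
    then have "cmod (a - b) \<le> cmod (f (\<psi> z2) - b) + cmod (f (\<psi> z1) - a)"
      by (metis norm_triangle_ineq4)
    with assms that show False by fastforce
  qed
  then show ?thesis by blast
qed

lemma universal_index_beyond:
  assumes univ: "universal \<Omega> \<phi> \<M> f" and S: "K \<union> I1 \<union> I2 \<in> \<M>"
    and "closed I1" "closed I2" "I1 \<inter> I2 = {}" and "compact L" "L \<subseteq> \<Omega>"
  shows "\<exists>n\<ge>m. \<phi> n ` K \<inter> L = {} \<and> \<phi> n ` I1 \<inter> \<phi> n ` I2 = {}"
proof (cases "K \<union> I1 \<union> I2 = {}")
  case True
  then show ?thesis by auto
next
  case False
  then obtain z0 where z0: "z0 \<in> K \<union> I1 \<union> I2" by blast
  have "f holomorphic_on \<Omega>" using univ by (simp add: universal_def)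
  then have "continuous_on L f"
    using assms(7) holomorphic_on_imp_continuous_on continuous_on_subset by blast
  then have "bounded (f ` L)"
    using assms(6) compact_continuous_image compact_imp_bounded by blast
  then obtain B where B: "\<And>w. w \<in> L \<Longrightarrow> cmod (f w) \<le> B"
    by (auto simp: bounded_iff)
  have "bounded ((\<lambda>k. f (\<phi> k z0)) ` {..<m})" by (simp add: finite_imp_bounded)
  then obtain C where C: "\<And>k. k < m \<Longrightarrow> cmod (f (\<phi> k z0)) \<le> C"
    by (auto simp: bounded_iff)
  define A where "A = \<bar>B\<bar> + \<bar>C\<bar> + 1"
  obtain u :: "complex \<Rightarrow> real" where u: "continuous_on UNIV u"
    "\<And>z. u z \<in> closed_segment A (A + 3)" "\<And>z. z \<in> I1 \<Longrightarrow> u z = A" "\<And>z. z \<in> I2 \<Longrightarrow> u z = A + 3"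
    using Urysohn[OF assms(3-5), where a = A and b = "A + 3"] by blast
  have cont: "continuous_on (K \<union> I1 \<union> I2) (\<lambda>z. complex_of_real (u z))"
    by (rule continuous_on_subset[OF continuous_on_of_real[OF u(1)]]) simp
  obtain n where n: "\<And>z. z \<in> K \<union> I1 \<union> I2 \<Longrightarrow> cmod (f (\<phi> n z) - of_real (u z)) < 1"
    using universal_approximates[OF univ S cont zero_less_one] by blast
  have large: "cmod (f (\<phi> n z)) > \<bar>B\<bar> + \<bar>C\<bar>" if "z \<in> K \<union> I1 \<union> I2" for z
  proof -
    have "A \<le> u z" using u(2)[of z] by (simp add: closed_segment_eq_real_ivl)
    then have "A \<le> cmod (of_real (u z) :: complex)" by (simp add: A_def)
    also have "\<dots> \<le> cmod (f (\<phi> n z)) + cmod (f (\<phi> n z) - of_real (u z))"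
      using norm_triangle_ineq4[of "f (\<phi> n z)" "f (\<phi> n z) - of_real (u z)"] by simp
    finally show ?thesis using n[OF that] by (simp add: A_def)
  qed
  have "m \<le> n"
  proof (rule ccontr)
    assume "\<not> m \<le> n"
    then show False using C[of n] large[OF z0] by simp
  qed
  moreover have "\<phi> n ` K \<inter> L = {}"
  proof (rule image_disjoint_if_norm_gt)
    show "B < cmod (f (\<phi> n z))" if "z \<in> K" for z
      using large[of z] that by simp
  qed (rule B)
  moreover have "\<phi> n ` I1 \<inter> \<phi> n ` I2 = {}"
  proof (rule image_disjoint_if_close_to_distinct)
    show "cmod (f (\<phi> n z) - of_real A) < 1" if "z \<in> I1" for z
      using n[of z] u(3)[OF that] that by simp
    show "cmod (f (\<phi> n z) - of_real (A + 3)) < 1" if "z \<in> I2" for z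
      using n[of z] u(4)[OF that] that by simp
    show "2 * 1 \<le> cmod (of_real A - of_real (A + 3) :: complex)"
      by (simp flip: of_real_diff)
  qed
  ultimately show ?thesis by blast
qed

theorem mainTheorem13:
  fixes \<Omega> G :: "complex set" and \<phi> :: "nat \<Rightarrow> complex \<Rightarrow> complex"
    and \<M> :: "complex set set"
  assumes "open \<Omega>" "connected \<Omega>" "\<Omega> \<noteq> {}"
    and "closed G" "interior G = {}"
    and "\<And>n. continuous_on G (\<phi> n)" "\<And>n. \<phi> n ` G \<subseteq> \<Omega>"
    and "countable \<M>" "\<And>K. K \<in> \<M> \<Longrightarrow> compact K \<and> K \<subseteq> G"
    and "\<exists>f. universal \<Omega> \<phi> \<M> f"
    and "compact L" "L \<subseteq> \<Omega>"
    and "K \<in> \<M>" "I1 \<in> \<M>" "I2 \<in> \<M>" "I1 \<inter> I2 = {}" "K \<union> I1 \<union> I2 \<in> \<M>"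
  shows "infinite {n. \<phi> n ` K \<inter> L = {} \<and> \<phi> n ` I1 \<inter> \<phi> n ` I2 = {}}"
proof -
  obtain f where f: "universal \<Omega> \<phi> \<M> f" using assms(10) by blast
  have closed: "closed I1" "closed I2" by (simp_all add: assms(9,14,15) compact_imp_closed)
  have "\<exists>n\<ge>m. \<phi> n ` K \<inter> L = {} \<and> \<phi> n ` I1 \<inter> \<phi> n ` I2 = {}" for m
    by (rule universal_index_beyond[OF f assms(17) closed assms(16,11,12)])
  then show ?thesis unfolding infinite_nat_iff_unbounded_le by simp
qed

end
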